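(* Let $g\ge2$, $n\ge1$, let $(t_1,\ldots,t_n)$ be a generic $n$-tuple of elements of $T$, let $l\in\{1,\ldots,n\}$, let $X$ and $Y$ be disjoint sets with $X\sqcup Y=\{c_i\mid i\in\{1,\ldots,n\}\setminus\{l\}\}$, let $(i,j,k)$ be a permutation of $(1,2,3)$, and let $f:\{1,\ldots,n\}\to\{1,2,3\}$ be a function. Then the collection of sections $$\{s^l_{ij}(x), s^l_{ik}(x)\mid x\in\{a_1,\ldots,a_g,b_1,\ldots,b_g\}\cup X\}\cup\{s^l_{f(q),j}(c_q), s^l_{f(q),k}(c_q)\mid c_q\in Y\}$$ has no common zeros on $S_g(t_1,\ldots,t_n)$.
   Context: Let $\Sigma$ be a compact Riemann surface of genus $g$, $p_1,\ldots,p_n\in\Sigma$ distinct points, and fix the presentation $\pi_1(\Sigma\setminus\{p_1,\ldots,p_n\}) = \langle a_1,\ldots,a_g,b_1,\ldots,b_g,c_1,\ldots,c_n \mid \prod_{i=1}^g[a_i,b_i]=\prod_{j=1}^n c_j\rangle$. Let $G=SU(3)$, $T\subset G$ the diagonal maximal torus. An $n$-tuple $(t_1,\ldots,t_n)$ in $T$ is generic if each $t_j$ has centralizer $T$ in $G$ and no product $\lambda_1\cdots\lambda_n$ with $\lambda_i$ an eigenvalue of $t_i$ equals $1$. Let $S_g(t_1,\ldots,t_n) := \{\rho\in\mathrm{Hom}(\pi_1(\Sigma\setminus\{p_1,\ldots,p_n\}),G)\mid\rho(c_i)\sim t_i\ \forall i\}/G$ (conjugation quotient), and $V^l_g(t_1,\ldots,t_n):=\{\rho\mid\rho(c_l)=t_l,\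 \rho(c_i)\sim t_i\ \forall i\}$, a $T$-bundle over $S_g(t_1,\ldots,t_n)$ under conjugation. For $1\le j,k\le 3$ let $\mathbb{C}_{(jk)}$ (resp. $\mathbb{C}_{(j)}$) be the representation of $T$ in which $\mathrm{diag}(e^{i\theta_1},e^{i\theta_2},e^{i\theta_3})$ acts by $e^{i(\theta_j-\theta_k)}$ (resp. $e^{i\theta_j}$), and $L^l_{jk}$ (resp. $L^l_j$) the associated line bundle over $S_g(t_1,\ldots,t_n)$. Two kinds of sections are used (note the comma distinguishing them). (i) For a generator $x\in\{a_1,\ldots,a_g,b_1,\ldots,b_g,c_1,\ldots,c_n\}\setminus\{c_l\}$, $s^l_{jk}(x)$ is the section of $L^l_{jk}$ induced by the $T$-equivariant map $\rho\mapsto(\rho(x))_{jk}$ on $V^l_g(t_1,\ldots,t_n)$; it vanishes at $[\rho]$ iff $(\rho(x))_{jk}=0$ for a representative $\rho\in V^l_g(t_1,\ldots,t_n)$. (ii) For $c_{i'}$ with $i'\neq l$, $s^l_{j,k}(c_{i'})$ is a section of $L^l_j$ defined via a matrix $A\in SU(3)$ with $A\rho(c_{i'})A^{-1}=t_{i'}$ ($\rho\in V^l_g(t_1,\ldots,t_n)$ a representative; $A$ unique up to left multiplication by $T$), taking value given by $A_{jk}$; it vanishes at $[\rho]$ iff $A_{jk}=0$, equivalently iff the $k$-th coordinate of an eigenvector of $\rho(c_{i'})$ with eigenvalue $(t_{i'})_{jj}$ is zero. *)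

theory Defs
  imports "HOL-Analysis.Analysis" "HOL-Library.Numeral_Type"
begin

text \<open>3x3 complex matrices; rows/columns indexed by the 3-element type 3
  (its three elements play the role of the indices 1,2,3).\<close>
type_synonym cmat3 = "complex^3^3"

definition adj3 :: "cmat3 \<Rightarrow> cmat3" where
  "adj3 A = (\<chi> r s. cnj (A $ s $ r))"

definition SU3 :: "cmat3 set" where
  "SU3 = {A. A ** adj3 A = mat 1 \<and> det A = 1}"

definition torus3 :: "cmat3 set" where
  "torus3 = {A \<in> SU3. \<forall>r s. r \<noteq> s \<longrightarrow> A $ r $ s = 0}"

definition centralizer3 :: "cmat3 \<Rightarrow> cmat3 set" where
  "centralizer3 t = {h \<in> SU3. h ** t = t ** h}"

definition is_eigenvalue3 :: "cmat3 \<Rightarrow> complex \<Rightarrow> bool" where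
  "is_eigenvalue3 t mu \<longleftrightarrow> (\<exists>v. v \<noteq> 0 \<and> t *v v = mu *s v)"

definition generic :: "nat \<Rightarrow> (nat \<Rightarrow> cmat3) \<Rightarrow> bool" where
  "generic n t \<longleftrightarrow>
     (\<forall>q\<in>{1..n}. t q \<in> torus3 \<and> centralizer3 (t q) = torus3) \<and>
     (\<forall>ev::nat \<Rightarrow> complex. (\<forall>q\<in>{1..n}. is_eigenvalue3 (t q) (ev q))
        \<longrightarrow> (\<Prod>q=1..n. ev q) \<noteq> 1)"

definition conj_SU3 :: "cmat3 \<Rightarrow> cmat3 \<Rightarrow> bool" where
  "conj_SU3 A B \<longleftrightarrow> (\<exists>P\<in>SU3. P ** A ** matrix_inv P = B)"

definition commutator3 :: "cmat3 \<Rightarrow> cmat3 \<Rightarrow> cmat3" where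
  "commutator3 x y = x ** y ** matrix_inv x ** matrix_inv y"

definition oprod3 :: "(nat \<Rightarrow> cmat3) \<Rightarrow> nat \<Rightarrow> cmat3" where
  "oprod3 M m = foldr (\<lambda>q acc. M q ** acc) [1..<m+1] (mat 1)"

text \<open>A representation rho of pi_1 of the n-punctured genus g surface into SU(3),
  given by the images a_1..a_g, b_1..b_g, c_1..c_n of the generators, subject to
  prod [a_i,b_i] = prod c_j.\<close>
definition is_rep :: "nat \<Rightarrow> nat \<Rightarrow> (nat \<Rightarrow> cmat3) \<Rightarrow> (nat \<Rightarrow> cmat3) \<Rightarrow> (nat \<Rightarrow> cmat3) \<Rightarrow> bool" where
  "is_rep g n a b c \<longleftrightarrow>
     (\<forall>m\<in>{1..g}. a m \<in> SU3 \<and> b m \<in> SU3) \<and> (\<forall>q\<in>{1..n}. c q \<in> SU3) \<and>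
     oprod3 (\<lambda>m. commutator3 (a m) (b m)) g = oprod3 c n"

definition in_V :: "nat \<Rightarrow> nat \<Rightarrow> (nat \<Rightarrow> cmat3) \<Rightarrow> nat \<Rightarrow>
    (nat \<Rightarrow> cmat3) \<Rightarrow> (nat \<Rightarrow> cmat3) \<Rightarrow> (nat \<Rightarrow> cmat3) \<Rightarrow> bool" where
  "in_V g n t l a b c \<longleftrightarrow> is_rep g n a b c \<and> c l = t l \<and>
     (\<forall>q\<in>{1..n}. conj_SU3 (c q) (t q))"

text \<open>Vanishing of the section s^l_{r,s}(c_q) at the class of a representative with
  rho(c_q) = C: A_{rs} = 0 for A in SU(3) with A C A^{-1} = t_q (A is unique up to
  left multiplication by T, so this does not depend on the choice of A).\<close>
definition comma_section_vanishes :: "cmat3 \<Rightarrow> cmat3 \<Rightarrow> 3 \<Rightarrow> 3 \<Rightarrow> bool" where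
  "comma_section_vanishes C tq r s \<longleftrightarrow>
     (\<forall>A\<in>SU3. A ** C ** matrix_inv A = tq \<longrightarrow> A $ r $ s = 0)"

end

theory Submission
  imports Defs
begin

text \<open>If all the listed sections vanish at \<rho>, then the standard basis vector e_i spans a
  line invariant under every \<rho>(a_m), \<rho>(b_m) and \<rho>(c_q): for q \<in> X this is the
  vanishing of the entries directly, for q \<in> Y the conjugating matrix A maps e_i to the
  eigenline of t_q with index f(q), and \<rho>(c_l) = t_l is diagonal. Unitary matrices
  preserving \<open>\<complex>e_i\<close> also preserve its orthogonal complement, so all these matrices are
  block diagonal and their (i,i) entries multiply. Comparing (i,i) entries in
  \<Prod>[a_m,b_m] = \<Prod>c_q gives 1 = \<Prod>\<rho>(c_q)_ii, where each \<rho>(c_q)_ii is an eigenvalue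
  of t_q; this contradicts genericity.\<close>

definition axis_block :: "'n::finite \<Rightarrow> 'a::zero^'n^'n \<Rightarrow> bool" where
  "axis_block i M \<longleftrightarrow> (\<forall>r. r \<noteq> i \<longrightarrow> M $ i $ r = 0 \<and> M $ r $ i = 0)"

lemma exhaust_3_distinct:
  fixes i j k s :: 3
  assumes "i \<noteq> j" "j \<noteq> k" "i \<noteq> k"
  shows "s = i \<or> s = j \<or> s = k"
  using assms exhaust_3[of i] exhaust_3[of j] exhaust_3[of k] exhaust_3[of s] by metis

lemma sum_UNIV_eq_single:
  fixes f :: "'n::finite \<Rightarrow> 'a::comm_monoid_add"
  assumes "\<And>u. u \<noteq> i \<Longrightarrow> f u = 0"
  shows "sum f UNIV = f i"
  using sum.mono_neutral_right[of UNIV "{i}" f] assms by auto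

lemma matrix_mult_entry: "(A ** B) $ r $ s = (\<Sum>u\<in>UNIV. A $ r $ u * B $ u $ s)"
  by (simp add: matrix_matrix_mult_def)

lemma axis_block_mult_entry:
  fixes A B :: "'a::semiring_1^'n^'n"
  assumes "axis_block i A" "axis_block i B" "r = i \<or> s = i"
  shows "(A ** B) $ r $ s = A $ r $ i * B $ i $ s"
  unfolding matrix_mult_entry
  by (rule sum_UNIV_eq_single) (use assms in \<open>auto simp: axis_block_def\<close>)

lemma axis_block_mult:
  fixes A B :: "'a::semiring_1^'n^'n"
  assumes "axis_block i A" "axis_block i B"
  shows "axis_block i (A ** B)"
  using assms axis_block_mult_entry[OF assms] unfolding axis_block_def by auto

lemma axis_block_mult_diag:
  fixes A B :: "'a::semiring_1^'n^'n"
  assumes "axis_block i A" "axis_block i B"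
  shows "(A ** B) $ i $ i = A $ i $ i * B $ i $ i"
  using axis_block_mult_entry[OF assms] by simp

lemma axis_block_mat1: "axis_block i (mat 1 :: 'a::semiring_1^'n^'n)"
  by (auto simp: axis_block_def mat_def)

lemma axis_block_foldr:
  fixes M :: "'b \<Rightarrow> 'a::semiring_1^'n^'n"
  assumes "\<forall>q\<in>set xs. axis_block i (M q)"
  shows "axis_block i (foldr (\<lambda>q acc. M q ** acc) xs (mat 1)) \<and>
         foldr (\<lambda>q acc. M q ** acc) xs (mat 1) $ i $ i = prod_list (map (\<lambda>q. M q $ i $ i) xs)"
  using assms
proof (induction xs)
  case Nil
  then show ?case using axis_block_mat1[of i] by (simp add: mat_def)
next
  case (Cons x xs)
  then show ?case by (simp add: axis_block_mult axis_block_mult_diag)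
qed

lemma axis_block_oprod3:
  assumes "\<forall>q\<in>{1..m}. axis_block i (M q)"
  shows "axis_block i (oprod3 M m)" and "oprod3 M m $ i $ i = (\<Prod>q=1..m. M q $ i $ i)"
proof -
  have set: "set [1..<m+1] = {1..m}" by auto
  have "(\<Prod>q=1..m. M q $ i $ i) = prod_list (map (\<lambda>q. M q $ i $ i) [1..<m+1])"
    by (metis set prod.distinct_set_conv_list distinct_upt)
  then show "axis_block i (oprod3 M m)" "oprod3 M m $ i $ i = (\<Prod>q=1..m. M q $ i $ i)"
    using axis_block_foldr[of "[1..<m+1]" i M] assms set
    unfolding oprod3_def by (simp_all del: upt_Suc)
qed

lemma axis_block_adj3:
  assumes "axis_block i A"
  shows "axis_block i (adj3 A)" and "adj3 A $ i $ i = cnj (A $ i $ i)"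
  using assms by (simp_all add: axis_block_def adj3_def)

lemma axis_block_torus3: "D \<in> torus3 \<Longrightarrow> axis_block i D"
  by (simp add: torus3_def axis_block_def)

lemma SU3_adj3_mult:
  assumes "A \<in> SU3"
  shows "A ** adj3 A = mat 1" and "adj3 A ** A = mat 1"
  using assms matrix_left_right_inverse by (auto simp: SU3_def)

lemma SU3_matrix_inv:
  assumes "A \<in> SU3"
  shows "matrix_inv A = adj3 A"
  unfolding matrix_inv_def
proof (rule some_equality)
  fix A' assume "A ** A' = mat 1 \<and> A' ** A = mat 1"
  then have "(adj3 A ** A) ** A' = adj3 A"
    by (simp flip: matrix_mul_assoc)
  then show "A' = adj3 A" using SU3_adj3_mult(2)[OF assms] by simp
qed (use SU3_adj3_mult[OF assms] in simp)

lemma SU3_row_single_entry: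
  assumes "A \<in> SU3" "\<And>s. s \<noteq> i \<Longrightarrow> A $ r $ s = 0"
  shows "A $ r $ i * cnj (A $ r $ i) = 1" and "\<And>r'. r' \<noteq> r \<Longrightarrow> A $ r' $ i = 0"
proof -
  have unit: "A ** adj3 A = mat 1" using SU3_adj3_mult(1)[OF assms(1)] .
  have entry: "(A ** adj3 A) $ r' $ r = A $ r' $ i * cnj (A $ r $ i)" for r'
    unfolding matrix_mult_entry adj3_def
    using sum_UNIV_eq_single[of i "\<lambda>u. A $ r' $ u * cnj (A $ r $ u)"] assms(2) by auto
  show norm1: "A $ r $ i * cnj (A $ r $ i) = 1"
    using entry[of r] unit by (simp add: mat_def)
  fix r' assume "r' \<noteq> r"
  then have "A $ r' $ i * cnj (A $ r $ i) = 0" using entry[of r'] unit by (simp add: mat_def)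
  moreover have "cnj (A $ r $ i) \<noteq> 0" using norm1 by auto
  ultimately show "A $ r' $ i = 0" by simp
qed

lemma SU3_axis_block_of_row:
  assumes "A \<in> SU3" "\<And>s. s \<noteq> i \<Longrightarrow> A $ i $ s = 0"
  shows "axis_block i A"
  using SU3_row_single_entry(2)[OF assms] assms(2) unfolding axis_block_def by auto

lemma SU3_axis_block_diag_unit:
  assumes "A \<in> SU3" "axis_block i A"
  shows "A $ i $ i * cnj (A $ i $ i) = 1"
  using SU3_row_single_entry(1)[OF assms(1), of i i] assms(2) unfolding axis_block_def by auto

lemma axis_block_commutator3:
  assumes "A \<in> SU3" "B \<in> SU3" "axis_block i A" "axis_block i B"
  shows "axis_block i (commutator3 A B)" and "commutator3 A B $ i $ i = 1"
proof -
  note blocks = assms(3,4) axis_block_adj3[OF assms(3)] axis_block_adj3[OF assms(4)]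
  have comm: "commutator3 A B = A ** B ** adj3 A ** adj3 B"
    unfolding commutator3_def SU3_matrix_inv[OF assms(1)] SU3_matrix_inv[OF assms(2)] ..
  show "axis_block i (commutator3 A B)"
    unfolding comm using blocks by (simp add: axis_block_mult)
  have "commutator3 A B $ i $ i
      = (A $ i $ i * cnj (A $ i $ i)) * (B $ i $ i * cnj (B $ i $ i))"
    unfolding comm using blocks by (simp add: axis_block_mult axis_block_mult_diag ac_simps)
  then show "commutator3 A B $ i $ i = 1"
    using SU3_axis_block_diag_unit assms by simp
qed

lemma SU3_conj_mult_eq:
  assumes "P \<in> SU3" "P ** C ** matrix_inv P = D"
  shows "P ** C = D ** P"
proof -
  have "P ** C = P ** C ** (adj3 P ** P)" using SU3_adj3_mult(2)[OF assms(1)] by simp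
  also have "\<dots> = (P ** C ** matrix_inv P) ** P"
    by (simp add: SU3_matrix_inv[OF assms(1)] matrix_mul_assoc)
  finally show ?thesis using assms(2) by simp
qed

text \<open>If row r of the conjugating matrix is supported in column i, then P maps e_i to a
  multiple of e_r, an eigenvector of the diagonal matrix D; hence e_i is an eigenvector of C.\<close>
lemma axis_block_conj_torus3:
  assumes "C \<in> SU3" "P \<in> SU3" "P ** C ** matrix_inv P = D" "D \<in> torus3"
    and row: "\<And>s. s \<noteq> i \<Longrightarrow> P $ r $ s = 0"
  shows "axis_block i C"
proof -
  have PC: "P ** C = D ** P" using SU3_conj_mult_eq[OF assms(2,3)] .
  have "P $ r $ i \<noteq> 0" using SU3_row_single_entry(1)[of P i r] assms(2) row by auto
  moreover have "P $ r $ i * C $ i $ s = 0" if "s \<noteq> i" for s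
  proof -
    have "(P ** C) $ r $ s = P $ r $ i * C $ i $ s"
      unfolding matrix_mult_entry by (rule sum_UNIV_eq_single) (use row in auto)
    moreover have "(D ** P) $ r $ s = D $ r $ r * P $ r $ s"
      unfolding matrix_mult_entry
      by (rule sum_UNIV_eq_single) (use assms(4) in \<open>auto simp: torus3_def\<close>)
    ultimately show ?thesis using PC row[OF that] by simp
  qed
  ultimately show ?thesis using SU3_axis_block_of_row[OF assms(1)] by simp
qed

lemma axis_block_mult_axis:
  fixes C :: "'a::semiring_1^'n^'n"
  assumes "axis_block i C"
  shows "C *v axis i 1 = C $ i $ i *s axis i 1"
proof -
  have "(C *v axis i 1) $ r = C $ r $ i" for r
    unfolding matrix_vector_mult_def
    by (simp, rule trans, rule sum_UNIV_eq_single) (auto simp: axis_def)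
  then show ?thesis using assms by (auto simp: vec_eq_iff axis_block_def axis_def)
qed

lemma axis_block_diag_eigenvalue:
  assumes "axis_block i C" "P \<in> SU3" "P ** C ** matrix_inv P = D"
  shows "is_eigenvalue3 D (C $ i $ i)"
proof -
  define e where "e = axis i (1::complex)"
  define v where "v = P *v e"
  note inv = SU3_matrix_inv[OF assms(2)] SU3_adj3_mult[OF assms(2)]
  have "D *v v = P *v (C *v ((adj3 P ** P) *v e))"
    unfolding v_def assms(3)[symmetric] inv(1)
    by (simp add: matrix_vector_mul_assoc matrix_mul_assoc)
  also have "\<dots> = C $ i $ i *s v"
    using inv axis_block_mult_axis[OF assms(1)]
    by (simp add: e_def v_def vector_scalar_commute)
  finally have eigen: "D *v v = C $ i $ i *s v" .
  have "adj3 P *v v = e" using inv by (simp add: v_def matrix_vector_mul_assoc)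
  then have "v \<noteq> 0" by (auto simp: e_def axis_eq_0_iff)
  with eigen show ?thesis unfolding is_eigenvalue3_def by blast
qed

lemma is_rep_axis_block_diag_prod:
  assumes "is_rep g n a b c"
    and "\<forall>m\<in>{1..g}. axis_block i (a m) \<and> axis_block i (b m)"
    and "\<forall>q\<in>{1..n}. axis_block i (c q)"
  shows "(\<Prod>q=1..n. c q $ i $ i) = 1"
proof -
  have SU: "\<forall>m\<in>{1..g}. a m \<in> SU3 \<and> b m \<in> SU3"
    and rel: "oprod3 (\<lambda>m. commutator3 (a m) (b m)) g = oprod3 c n"
    using assms(1) by (auto simp: is_rep_def)
  have "\<forall>m\<in>{1..g}. axis_block i (commutator3 (a m) (b m)) \<and> commutator3 (a m) (b m) $ i $ i = 1"
    using axis_block_commutator3 assms(2) SU by blast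
  then have "oprod3 (\<lambda>m. commutator3 (a m) (b m)) g $ i $ i = 1"
    by (simp add: axis_block_oprod3)
  then show ?thesis using rel axis_block_oprod3(2)[OF assms(3)] by simp
qed

lemma generic_axis_block_diag_prod:
  assumes "generic n t" "\<forall>q\<in>{1..n}. conj_SU3 (c q) (t q)"
    and "\<forall>q\<in>{1..n}. axis_block i (c q)"
  shows "(\<Prod>q=1..n. c q $ i $ i) \<noteq> 1"
proof -
  have "\<forall>ev. (\<forall>q\<in>{1..n}. is_eigenvalue3 (t q) (ev q)) \<longrightarrow> (\<Prod>q=1..n. ev q) \<noteq> 1"
    using assms(1) unfolding generic_def by blast
  moreover have "\<forall>q\<in>{1..n}. is_eigenvalue3 (t q) (c q $ i $ i)"
    using assms(2,3) axis_block_diag_eigenvalue unfolding conj_SU3_def by metis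
  ultimately show ?thesis by (rule spec[where x = "\<lambda>q. c q $ i $ i", THEN mp])
qed

theorem lemma2p7:
  fixes g n l :: nat and t :: "nat \<Rightarrow> cmat3" and X Y :: "nat set"
    and i j k :: 3 and f :: "nat \<Rightarrow> 3"
  assumes "g \<ge> 2" and "n \<ge> 1" and "generic n t" and "l \<in> {1..n}"
    and "X \<inter> Y = {}" and "X \<union> Y = {1..n} - {l}"
    and "i \<noteq> j" and "j \<noteq> k" and "i \<noteq> k"
  shows "\<forall>a b c. in_V g n t l a b c \<longrightarrow>
           \<not> ((\<forall>m\<in>{1..g}. a m $ i $ j = 0 \<and> a m $ i $ k = 0 \<and>
                           b m $ i $ j = 0 \<and> b m $ i $ k = 0) \<and>
              (\<forall>q\<in>X. c q $ i $ j = 0 \<and> c q $ i $ k = 0) \<and>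
              (\<forall>q\<in>Y. comma_section_vanishes (c q) (t q) (f q) j \<and>
                      comma_section_vanishes (c q) (t q) (f q) k))"
proof (intro allI impI notI, elim conjE)
  fix a b c
  assume V: "in_V g n t l a b c"
    and ab: "\<forall>m\<in>{1..g}. a m $ i $ j = 0 \<and> a m $ i $ k = 0 \<and> b m $ i $ j = 0 \<and> b m $ i $ k = 0"
    and cX: "\<forall>q\<in>X. c q $ i $ j = 0 \<and> c q $ i $ k = 0"
    and cY: "\<forall>q\<in>Y. comma_section_vanishes (c q) (t q) (f q) j \<and>
                    comma_section_vanishes (c q) (t q) (f q) k"
  have other: "s \<noteq> i \<Longrightarrow> s = j \<or> s = k" for s
    using exhaust_3_distinct[OF assms(7-9), of s] by blast
  have rep: "is_rep g n a b c" and conj: "\<forall>q\<in>{1..n}. conj_SU3 (c q) (t q)"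
    using V by (auto simp: in_V_def)
  have SU: "\<forall>m\<in>{1..g}. a m \<in> SU3 \<and> b m \<in> SU3" "\<forall>q\<in>{1..n}. c q \<in> SU3"
    using rep by (auto simp: is_rep_def)
  have torus: "\<forall>q\<in>{1..n}. t q \<in> torus3" using assms(3) by (simp add: generic_def)
  have "\<forall>m\<in>{1..g}. axis_block i (a m) \<and> axis_block i (b m)"
    using SU3_axis_block_of_row[of "a _" i] SU3_axis_block_of_row[of "b _" i] SU ab other
    by blast
  moreover have "\<forall>q\<in>{1..n}. axis_block i (c q)"
  proof
    fix q assume q: "q \<in> {1..n}"
    consider "q = l" | "q \<in> X" | "q \<in> Y" using assms(6) q by blast
    then show "axis_block i (c q)"
    proof cases
      case 1
      then show ?thesis using V torus q axis_block_torus3 by (simp add: in_V_def)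
    next
      case 2
      then show ?thesis using SU3_axis_block_of_row[of "c q" i] SU q cX other by blast
    next
      case 3
      obtain P where P: "P \<in> SU3" "P ** c q ** matrix_inv P = t q"
        using conj q unfolding conj_SU3_def by blast
      then have "P $ f q $ s = 0" if "s \<noteq> i" for s
        using cY 3 other[OF that] unfolding comma_section_vanishes_def by blast
      then show ?thesis using axis_block_conj_torus3[OF _ P] SU torus q by blast
    qed
  qed
  ultimately show False
    using is_rep_axis_block_diag_prod[OF rep] generic_axis_block_diag_prod[OF assms(3) conj]
    by blast
qed

end
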